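(* Let $H$ and $G$ be real Hilbert spaces and let $Z$ be a nonempty closed convex subset of $H\times G$. Let $x_0\in H\times G$, let $\{\lambda_n\}_{n\in\mathbb{N}}\subset(0,1]$, and let $\{H_n\}_{n\in\mathbb{N}}$ be closed convex subsets of $H\times G$ with $Z\subset H_n$ for all $n$. Consider any sequence generated as follows: for $n=0,1,\dots$, $$x_{n+1/2}=x_n+\lambda_n\big(P_{H_n}(x_n)-x_n\big),$$ choose a closed convex set $C_n$ with $Z\subset C_n\subset H(x_n,x_{n+1/2})$, and set $$x_{n+1}=P_{H(x_0,x_n)\cap C_n}(x_0).$$ Then: 1. $Z\subset H(x_0,x_n)\cap C_n$ for all $n\in\mathbb{N}$; 2. $\|x_{n+1}-x_0\|\ge\|x_n-x_0\|$ for all $n\in\mathbb{N}$; 3. $\sum_{n=0}^{\infty}\|x_{n+1}-x_n\|^2<+\infty$; 4. $\sum_{n=0}^{\infty}\|x_{n+1/2}-x_n\|^2<+\infty$; 5. if for every $x\in H\times G$ and every subsequence $\{x_{k_n}\}$ with $x_{k_n}\rightharpoonup x$ (weakly) one has $x\in Z$, then $x_n\to P_Z(x_0)$ strongly.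
   Context: $H\times G$ carries the product Hilbert structure. For $x,y\in H\times G$, $H(x,y):=\{h\in H\times G:\ \langle h-y\mid x-y\rangle\le 0\}$ (so $H(x,x)$ is the whole space). $P_D$ denotes the metric projection onto a nonempty closed convex set $D$. *)

theory Defs
  imports "HOL-Analysis.Analysis"
begin

text \<open>Metric projection onto a set D (the library's closest_point requires heine_borel,
  which excludes infinite-dimensional Hilbert spaces): the (for nonempty closed convex D in a
  Hilbert space, unique) point of D nearest to x.\<close>
definition proj :: "'a::real_inner set \<Rightarrow> 'a \<Rightarrow> 'a" where
  "proj D x = (SOME p. p \<in> D \<and> (\<forall>y\<in>D. dist x p \<le> dist x y))"

definition halfsp :: "'a::real_inner \<Rightarrow> 'a \<Rightarrow> 'a set" where
  "halfsp x y = {h. inner (h - y) (x - y) \<le> 0}"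

definition weak_conv :: "(nat \<Rightarrow> 'a::real_inner) \<Rightarrow> 'a \<Rightarrow> bool" where
  "weak_conv u x \<longleftrightarrow> (\<forall>y. ((\<lambda>n. inner (u n) y) \<longlonglongrightarrow> inner x y))"

end

theory Submission
  imports Defs "HOL-Library.Diagonal_Subsequence"
begin

text \<open>
  A projection P_Q(x_0) leaves Q on the far side of the hyperplane through P_Q(x_0) orthogonal
  to x_0 - P_Q(x_0), i.e. Q \<subseteq> H(x_0, P_Q(x_0)); by induction Z \<subseteq> H(x_0, x_n) \<inter> C_n for all n.
  Since x_{n+1} \<in> H(x_0, x_n), Pythagoras gives
  norm (x_{n+1} - x_0)^2 \<ge> norm (x_n - x_0)^2 + norm (x_{n+1} - x_n)^2, while
  norm (x_n - x_0) \<le> R = norm (P_Z(x_0) - x_0) because P_Z(x_0) \<in> H(x_0, x_n) \<inter> C_n.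
  So the distances increase to a limit L \<le> R and the squared steps telescope to a finite sum;
  x_{n+1} \<in> H(x_n, x_{n+1/2}) bounds the half steps by the full ones.
  For strong convergence, a weak cluster point z of the bounded sequence lies in Z, and weak
  lower semicontinuity of the norm gives R \<le> norm (z - x_0) \<le> L, so L = R. Applying
  Pythagoras to P_Z(x_0) \<in> H(x_0, x_n) then yields
  norm (x_n - P_Z(x_0))^2 \<le> R^2 - norm (x_n - x_0)^2 \<rightarrow> 0.
\<close>

lemma norm_diff_midpoint_parallelogram:
  fixes x a b :: "'a::real_inner"
  shows "(norm (a - b))\<^sup>2 = 2 * (norm (x - a))\<^sup>2 + 2 * (norm (x - b))\<^sup>2 - 4 * (norm (x - midpoint a b))\<^sup>2"
  unfolding midpoint_def power2_norm_eq_inner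
  by (simp add: inner_diff_left inner_diff_right inner_add_left inner_add_right inner_commute algebra_simps)

lemma nearest_point_exists:
  fixes S :: "'a::{real_inner,complete_space} set"
  assumes "closed S" "convex S" "S \<noteq> {}"
  shows "\<exists>p\<in>S. \<forall>y\<in>S. dist x p \<le> dist x y"
proof -
  define \<delta> where "\<delta> = infdist x S"
  define e :: "nat \<Rightarrow> real" where "e n = inverse (Suc n)" for n
  have "\<exists>y\<in>S. (dist x y)\<^sup>2 < \<delta>\<^sup>2 + e n" for n
  proof -
    have "sqrt (\<delta>\<^sup>2 + e n) > \<delta>"
      using infdist_nonneg[of x S] by (simp add: \<delta>_def e_def real_less_rsqrt)
    then obtain y where "y \<in> S" "dist x y < sqrt (\<delta>\<^sup>2 + e n)"
      using cInf_lessD[of "dist x ` S"] assms(3) by (auto simp: \<delta>_def infdist_notempty)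
    moreover have "0 \<le> \<delta>\<^sup>2 + e n" by (simp add: e_def)
    ultimately show ?thesis
      using power_strict_mono[of "dist x y" "sqrt (\<delta>\<^sup>2 + e n)" 2] by auto
  qed
  then obtain y where y: "\<And>n. y n \<in> S" "\<And>n. (dist x (y n))\<^sup>2 < \<delta>\<^sup>2 + e n" by metis
  have \<delta>_le: "\<delta>\<^sup>2 \<le> (dist x z)\<^sup>2" if "z \<in> S" for z
    using infdist_le[OF that, of x] infdist_nonneg[of x S] by (simp add: \<delta>_def power_mono)
  have "(norm (y m - y n))\<^sup>2 \<le> 2 * e m + 2 * e n" for m n
  proof -
    have "midpoint (y m) (y n) \<in> S"
      using assms(2) y(1) csegment_midpoint_subset convex_contains_segment by blast
    from \<delta>_le[OF this] show ?thesis
      using y(2)[of m] y(2)[of n] norm_diff_midpoint_parallelogram[of "y m" "y n" x]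
      unfolding dist_norm by linarith
  qed
  have "Cauchy y"
  proof (rule metric_CauchyI)
    fix \<epsilon> :: real assume "0 < \<epsilon>"
    then obtain N where N: "e N < \<epsilon>\<^sup>2 / 4" using reals_Archimedean[of "\<epsilon>\<^sup>2 / 4"] by (auto simp: e_def)
    show "\<exists>M. \<forall>m\<ge>M. \<forall>n\<ge>M. dist (y m) (y n) < \<epsilon>"
    proof (intro exI allI impI)
      fix m n assume "N \<le> m" "N \<le> n"
      then have "e m \<le> e N" "e n \<le> e N" by (auto simp: e_def intro!: le_imp_inverse_le)
      with \<open>(norm (y m - y n))\<^sup>2 \<le> 2 * e m + 2 * e n\<close> N have "(dist (y m) (y n))\<^sup>2 < \<epsilon>\<^sup>2"
        unfolding dist_norm by linarith
      then show "dist (y m) (y n) < \<epsilon>"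
        using \<open>0 < \<epsilon>\<close> by (auto intro: power_less_imp_less_base)
    qed
  qed
  then obtain p where p: "y \<longlonglongrightarrow> p" using Cauchy_convergent_iff convergent_def by blast
  have "p \<in> S" using closed_sequentially[OF assms(1)] y(1) p by blast
  have "(\<lambda>n. (dist x (y n))\<^sup>2) \<longlonglongrightarrow> (dist x p)\<^sup>2" by (intro tendsto_intros p)
  moreover have "(\<lambda>n. \<delta>\<^sup>2 + e n) \<longlonglongrightarrow> \<delta>\<^sup>2"
    using tendsto_add[OF tendsto_const LIMSEQ_inverse_real_of_nat] by (simp add: e_def)
  ultimately have "(dist x p)\<^sup>2 \<le> \<delta>\<^sup>2"
    by (rule LIMSEQ_le) (use y(2) less_imp_le in blast)
  then have "dist x p \<le> dist x z" if "z \<in> S" for z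
    using power2_le_imp_le[OF order.trans[OF _ \<delta>_le[OF that]] zero_le_dist] by blast
  with \<open>p \<in> S\<close> show ?thesis by blast
qed

context
  fixes S :: "'a::{real_inner,complete_space} set"
  assumes S: "closed S" "convex S" "S \<noteq> {}"
begin

lemma proj_nearest_point: "proj S x \<in> S \<and> (\<forall>y\<in>S. dist x (proj S x) \<le> dist x y)"
  unfolding proj_def by (rule someI_ex) (use nearest_point_exists[OF S] in blast)

lemma proj_in: "proj S x \<in> S"
  using proj_nearest_point by blast

lemma proj_le_dist: "y \<in> S \<Longrightarrow> dist x (proj S x) \<le> dist x y"
  using proj_nearest_point by blast

lemma proj_inner_nonpos: "y \<in> S \<Longrightarrow> inner (x - proj S x) (y - proj S x) \<le> 0"
  using any_closest_point_dot[OF S(2,1)] proj_nearest_point by blast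

end

lemma proj_orthogonal:
  fixes S :: "'a::{real_inner,complete_space} set"
  assumes S: "closed S" "subspace S" and "m \<in> S"
  shows "inner (x - proj S x) m = 0"
proof -
  have S': "closed S" "convex S" "S \<noteq> {}" using S subspace_imp_convex subspace_0 by blast+
  have "proj S x + m \<in> S" "proj S x - m \<in> S"
    using proj_in[OF S'] \<open>m \<in> S\<close> S(2) subspace_add subspace_diff by blast+
  from this[THEN proj_inner_nonpos[OF S', of _ x]] show ?thesis
    by (simp add: inner_diff_right)
qed

lemma riesz_representation:
  fixes f :: "'a::{real_inner,complete_space} \<Rightarrow> real"
  assumes "bounded_linear f"
  shows "\<exists>z. \<forall>y. f y = inner z y"
proof (cases "\<forall>y. f y = 0")
  case True
  then show ?thesis by (intro exI[of _ 0]) auto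
next
  case False
  interpret f: bounded_linear f by fact
  obtain v where "f v \<noteq> 0" using False by blast
  define N where "N = {y. f y = 0}"
  have N: "closed N" "subspace N"
    unfolding N_def subspace_def
    by (auto intro!: closed_Collect_eq f.continuous_on continuous_on_id continuous_on_const
        simp: f.add f.scale)
  define w where "w = v - proj N v"
  have "proj N v \<in> N"
    using proj_in N subspace_imp_convex subspace_0 by blast
  then have fw: "f w \<noteq> 0" using \<open>f v \<noteq> 0\<close> by (simp add: w_def N_def f.diff)
  show ?thesis
  proof (intro exI allI)
    fix y
    have "y - (f y / f w) *\<^sub>R w \<in> N" using fw by (simp add: N_def f.diff f.scale)
    then have "inner w (y - (f y / f w) *\<^sub>R w) = 0"
      unfolding w_def by (rule proj_orthogonal[OF N])
    moreover have "inner w w \<noteq> 0" using fw by auto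
    ultimately show "f y = inner ((f w / inner w w) *\<^sub>R w) y"
      using fw by (simp add: inner_diff_right field_simps)
  qed
qed

lemma subspace_closure:
  fixes S :: "'a::real_normed_vector set"
  assumes "subspace S"
  shows "subspace (closure S)"
  unfolding subspace_def
proof (intro conjI ballI allI)
  show "0 \<in> closure S" using assms subspace_0 closure_subset by blast
next
  fix x y assume "x \<in> closure S" "y \<in> closure S"
  then obtain a b where "\<forall>n. a n \<in> S" "a \<longlonglongrightarrow> x" "\<forall>n. b n \<in> S" "b \<longlonglongrightarrow> y"
    unfolding closure_sequential by blast
  then show "x + y \<in> closure S"
    unfolding closure_sequential using subspace_add[OF assms]
    by (intro exI[of _ "\<lambda>n. a n + b n"]) (auto intro: tendsto_add)
next
  fix c :: real and x assume "x \<in> closure S"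
  then obtain a where "\<forall>n. a n \<in> S" "a \<longlonglongrightarrow> x" unfolding closure_sequential by blast
  then show "c *\<^sub>R x \<in> closure S"
    unfolding closure_sequential using subspace_scale[OF assms]
    by (intro exI[of _ "\<lambda>n. c *\<^sub>R a n"]) (auto intro: tendsto_scaleR)
qed

lemma subspace_inner_convergent: "subspace {y. convergent (\<lambda>n. inner (v n) y)}"
  unfolding subspace_def convergent_def
  by (auto simp: inner_add_right intro: tendsto_add tendsto_mult_left)

lemma closed_inner_convergent:
  fixes v :: "nat \<Rightarrow> 'a::real_inner"
  assumes B: "\<And>n. norm (v n) \<le> B"
  shows "closed {y. convergent (\<lambda>n. inner (v n) y)}" (is "closed ?C")
  unfolding closure_subset_eq[symmetric]
proof
  fix y assume "y \<in> closure ?C"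
  have "B \<ge> 0" using B order.trans norm_ge_zero by blast
  have diff_bound: "\<bar>inner (v m - v n) w\<bar> \<le> 2 * B * norm w" for m n w
  proof -
    have "norm (v m - v n) \<le> 2 * B" using norm_triangle_ineq4[of "v m" "v n"] B[of m] B[of n] by linarith
    then show ?thesis using Cauchy_Schwarz_ineq2 order.trans mult_right_mono norm_ge_zero by metis
  qed
  have "Cauchy (\<lambda>n. inner (v n) y)"
  proof (rule metric_CauchyI)
    fix \<epsilon> :: real assume "0 < \<epsilon>"
    moreover have "\<epsilon> / (3 * (B + 1)) > 0" using \<open>0 < \<epsilon>\<close> \<open>B \<ge> 0\<close> by simp
    ultimately obtain d where "d \<in> ?C" and d: "dist d y < \<epsilon> / (3 * (B + 1))"
      using \<open>y \<in> closure ?C\<close> unfolding closure_approachable by blast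
    then have "Cauchy (\<lambda>n. inner (v n) d)" by (simp add: convergent_Cauchy)
    moreover have "\<epsilon> / 3 > 0" using \<open>0 < \<epsilon>\<close> by simp
    ultimately obtain N where N: "\<And>m n. N \<le> m \<Longrightarrow> N \<le> n \<Longrightarrow> dist (inner (v m) d) (inner (v n) d) < \<epsilon> / 3"
      using metric_CauchyD by blast
    have "2 * B * norm (y - d) < \<epsilon> * 2 / 3"
    proof -
      have "2 * B * norm (y - d) \<le> 2 * B * (\<epsilon> / (3 * (B + 1)))"
        using d \<open>B \<ge> 0\<close> by (intro mult_left_mono) (auto simp: dist_norm norm_minus_commute)
      also have "\<dots> < \<epsilon> * 2 / 3" using \<open>B \<ge> 0\<close> \<open>0 < \<epsilon>\<close> by (simp add: field_simps)
      finally show ?thesis .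
    qed
    show "\<exists>M. \<forall>m\<ge>M. \<forall>n\<ge>M. dist (inner (v m) y) (inner (v n) y) < \<epsilon>"
    proof (intro exI allI impI)
      fix m n assume "N \<le> m" "N \<le> n"
      have "inner (v m) y - inner (v n) y = (inner (v m) d - inner (v n) d) + inner (v m - v n) (y - d)"
        by (simp add: inner_diff_left inner_diff_right)
      then show "dist (inner (v m) y) (inner (v n) y) < \<epsilon>"
        using N[OF \<open>N \<le> m\<close> \<open>N \<le> n\<close>] diff_bound[of m n "y - d"] \<open>2 * B * norm (y - d) < \<epsilon> * 2 / 3\<close>
        unfolding dist_real_def by linarith
    qed
  qed
  then show "y \<in> ?C" by (simp add: Cauchy_convergent_iff)
qed

lemma convergent_inner_if_convergent_on_terms:
  fixes v :: "nat \<Rightarrow> 'a::{real_inner,complete_space}"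
  assumes "\<And>n. norm (v n) \<le> B" "\<And>m. convergent (\<lambda>n. inner (v n) (v m))"
  shows "convergent (\<lambda>n. inner (v n) y)"
proof -
  \<comment> \<open>Each inner (v n) only sees the projection of y onto the closed span M of the terms.\<close>
  define M where "M = closure (span (range v))"
  have M: "closed M" "subspace M"
    unfolding M_def by (auto intro: subspace_closure subspace_span)
  have "M \<subseteq> {y. convergent (\<lambda>n. inner (v n) y)}"
    unfolding M_def using assms(2)
    by (intro closure_minimal span_minimal subspace_inner_convergent closed_inner_convergent[OF assms(1)]) auto
  moreover have "proj M y \<in> M"
    using proj_in M subspace_imp_convex subspace_0 by blast
  moreover have "inner (v n) y = inner (v n) (proj M y)" for n
  proof -
    have "v n \<in> M" unfolding M_def by (simp add: closure_subset[THEN subsetD] span_base)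
    from proj_orthogonal[OF M this, of y] have "inner (v n) (y - proj M y) = 0"
      by (simp add: inner_commute)
    then show ?thesis by (simp add: inner_diff_right)
  qed
  ultimately show ?thesis by (simp add: subset_eq)
qed

lemma weak_conv_if_convergent_inner:
  fixes v :: "nat \<Rightarrow> 'a::{real_inner,complete_space}"
  assumes "\<And>n. norm (v n) \<le> B" "\<And>y. convergent (\<lambda>n. inner (v n) y)"
  shows "\<exists>z. weak_conv v z"
proof -
  define f where "f y = lim (\<lambda>n. inner (v n) y)" for y
  have f: "(\<lambda>n. inner (v n) y) \<longlonglongrightarrow> f y" for y
    using assms(2) by (simp add: f_def convergent_LIMSEQ_iff)
  have "bounded_linear f"
  proof (rule bounded_linear_intro[of _ B])
    show "f (a + b) = f a + f b" for a b
      using f[of "a + b"] tendsto_add[OF f f] by (simp add: inner_add_right LIMSEQ_unique)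
    show "f (c *\<^sub>R a) = c *\<^sub>R f a" for c a
      using f[of "c *\<^sub>R a"] tendsto_mult_left[OF f] by (simp add: LIMSEQ_unique)
    show "norm (f a) \<le> norm a * B" for a
    proof (rule LIMSEQ_le_const2)
      show "(\<lambda>n. norm (inner (v n) a)) \<longlonglongrightarrow> norm (f a)" by (intro tendsto_intros f)
      show "\<exists>N. \<forall>n\<ge>N. norm (inner (v n) a) \<le> norm a * B"
        using Cauchy_Schwarz_ineq2 assms(1) mult_left_mono norm_ge_zero order.trans
        by (metis mult.commute real_norm_def)
    qed
  qed
  then obtain z where "\<And>y. f y = inner z y" using riesz_representation by blast
  then have "weak_conv v z" unfolding weak_conv_def using f by simp
  then show ?thesis ..
qed

lemma bounded_inner_convergent_subseq:
  fixes u :: "nat \<Rightarrow> 'a::real_inner"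
  assumes "\<And>n. norm (u n) \<le> B"
  shows "\<exists>k. strict_mono k \<and> (\<forall>m. convergent (\<lambda>n. inner (u (k n)) (u m)))"
proof -
  interpret subseqs "\<lambda>m s. convergent (\<lambda>j. inner (u (s j)) (u m))"
  proof unfold_locales
    fix m and s :: "nat \<Rightarrow> nat"
    have "\<bar>inner (u (s j)) (u m)\<bar> \<le> B * B" for j
      using Cauchy_Schwarz_ineq2 assms mult_mono norm_ge_zero order.trans by metis
    then have "bounded (range (\<lambda>j. inner (u (s j)) (u m)))"
      unfolding bounded_iff by auto
    from bounded_imp_convergent_subsequence[OF this] obtain l r
      where "strict_mono r" "((\<lambda>j. inner (u (s j)) (u m)) \<circ> r) \<longlonglongrightarrow> l" by blast
    then show "\<exists>r. strict_mono r \<and> convergent (\<lambda>j. inner (u ((s \<circ> r) j)) (u m))"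
      by (auto simp: convergent_def o_def)
  qed
  define k where "k = diagseq"
  have "convergent (\<lambda>n. inner (u (k n)) (u m))" for m
  proof -
    have "convergent (\<lambda>j. inner (u ((diagseq \<circ> (+) (Suc m)) j)) (u m))"
    proof (rule diagseq_holds)
      fix r s n assume "strict_mono (r :: nat \<Rightarrow> nat)" "convergent (\<lambda>j. inner (u (s j)) (u n))"
      from convergent_subseq_convergent[OF this(2,1)]
      show "convergent (\<lambda>j. inner (u ((s \<circ> r) j)) (u n))" by (simp add: o_def)
    qed
    then obtain l where "(\<lambda>j. inner (u (k (j + Suc m))) (u m)) \<longlonglongrightarrow> l"
      by (auto simp: convergent_def o_def k_def add.commute)
    then show ?thesis unfolding convergent_def by (blast intro: LIMSEQ_offset)
  qed
  then show ?thesis using subseq_diagseq unfolding k_def by blast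
qed

lemma bounded_imp_weak_conv_subseq:
  fixes u :: "nat \<Rightarrow> 'a::{real_inner,complete_space}"
  assumes "\<And>n. norm (u n) \<le> B"
  shows "\<exists>k z. strict_mono k \<and> weak_conv (u \<circ> k) z"
proof -
  obtain k where k: "strict_mono k" "\<And>m. convergent (\<lambda>n. inner (u (k n)) (u m))"
    using bounded_inner_convergent_subseq[of u B, OF assms] by blast
  have "convergent (\<lambda>n. inner ((u \<circ> k) n) y)" for y
  proof (rule convergent_inner_if_convergent_on_terms)
    show "norm ((u \<circ> k) n) \<le> B" for n using assms by simp
    show "convergent (\<lambda>n. inner ((u \<circ> k) n) ((u \<circ> k) m))" for m using k(2) by simp
  qed
  then obtain z where "weak_conv (u \<circ> k) z"
    using weak_conv_if_convergent_inner[of "u \<circ> k" B] assms by fastforce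
  with k(1) show ?thesis by blast
qed

lemma weak_conv_norm_le:
  fixes v :: "nat \<Rightarrow> 'a::real_inner"
  assumes "weak_conv v z" "\<And>n. norm (v n - a) \<le> L"
  shows "norm (z - a) \<le> L"
proof -
  have "(\<lambda>n. inner (v n) (z - a) - inner a (z - a)) \<longlonglongrightarrow> inner z (z - a) - inner a (z - a)"
    using assms(1) unfolding weak_conv_def by (intro tendsto_diff tendsto_const) blast
  then have "(\<lambda>n. inner (v n - a) (z - a)) \<longlonglongrightarrow> (norm (z - a))\<^sup>2"
    by (simp add: inner_diff_left power2_norm_eq_inner)
  moreover have "inner (v n - a) (z - a) \<le> L * norm (z - a)" for n
    using norm_cauchy_schwarz[of "v n - a" "z - a"] assms(2)[of n] mult_right_mono norm_ge_zero order.trans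
    by metis
  ultimately have "norm (z - a) * norm (z - a) \<le> L * norm (z - a)"
    by (simp add: LIMSEQ_le_const2 power2_eq_square)
  moreover have "0 \<le> L" using assms(2) norm_ge_zero order.trans by blast
  ultimately show ?thesis
    by (cases "norm (z - a) = 0") (auto simp: mult_le_cancel_right)
qed

lemma halfsp_eq: "halfsp a b = {h. inner (a - b) h \<le> inner (a - b) b}"
  unfolding halfsp_def by (auto simp: inner_diff_left inner_commute)

lemma closed_halfsp: "closed (halfsp a b)"
  unfolding halfsp_eq by (rule closed_halfspace_le)

lemma convex_halfsp: "convex (halfsp a b)"
  unfolding halfsp_eq by (rule convex_halfspace_le)

lemma halfsp_self [simp]: "halfsp a a = UNIV"
  unfolding halfsp_def by simp

lemma halfsp_pythagoras:
  assumes "h \<in> halfsp a b"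
  shows "(norm (h - b))\<^sup>2 + (norm (a - b))\<^sup>2 \<le> (norm (h - a))\<^sup>2"
proof -
  have "(norm (h - a))\<^sup>2 = (norm ((h - b) - (a - b)))\<^sup>2" by simp
  also have "\<dots> = (norm (h - b))\<^sup>2 + (norm (a - b))\<^sup>2 - 2 * inner (h - b) (a - b)"
    unfolding power2_norm_eq_inner by (simp add: inner_diff_left inner_diff_right inner_commute)
  finally show ?thesis using assms by (simp add: halfsp_def)
qed

lemma subset_halfsp_proj:
  fixes S :: "'a::{real_inner,complete_space} set"
  assumes "closed S" "convex S" "S \<noteq> {}"
  shows "S \<subseteq> halfsp a (proj S a)"
  using proj_inner_nonpos[OF assms] by (auto simp: halfsp_def inner_commute)

locale haugazeau_iteration =
  fixes Z :: "'a::{real_inner,complete_space} set"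
    and x xh :: "nat \<Rightarrow> 'a"
    and C :: "nat \<Rightarrow> 'a set"
  assumes Z: "Z \<noteq> {}" "closed Z" "convex Z"
    and C: "\<And>n. closed (C n)" "\<And>n. convex (C n)" "\<And>n. Z \<subseteq> C n" "\<And>n. C n \<subseteq> halfsp (x n) (xh n)"
    and x_Suc: "\<And>n. x (Suc n) = proj (halfsp (x 0) (x n) \<inter> C n) (x 0)"
begin

abbreviation Q :: "nat \<Rightarrow> 'a set" where
  "Q n \<equiv> halfsp (x 0) (x n) \<inter> C n"

lemma closed_Q: "closed (Q n)"
  by (intro closed_Int closed_halfsp C(1))

lemma convex_Q: "convex (Q n)"
  by (intro convex_Int convex_halfsp C(2))

lemma Z_subset_Q: "Z \<subseteq> Q n"
proof (induction n)
  case 0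
  show ?case using C(3) by simp
next
  case (Suc n)
  then have "Q n \<noteq> {}" using Z(1) by blast
  then have "Z \<subseteq> halfsp (x 0) (x (Suc n))"
    using Suc subset_halfsp_proj[OF closed_Q convex_Q, of n "x 0"] unfolding x_Suc[of n] by blast
  with C(3) show ?case by blast
qed

lemma Q_nonempty: "Q n \<noteq> {}"
  using Z_subset_Q[of n] Z(1) by blast

lemma x_Suc_in_Q: "x (Suc n) \<in> Q n"
  unfolding x_Suc[of n] by (rule proj_in[OF closed_Q convex_Q Q_nonempty])

lemma norm_x_le_proj: "norm (x n - x 0) \<le> norm (proj Z (x 0) - x 0)"
proof (cases n)
  case (Suc m)
  have "proj Z (x 0) \<in> Q m" using proj_in[OF Z(2,3,1)] Z_subset_Q by blast
  then have "dist (x 0) (x n) \<le> dist (x 0) (proj Z (x 0))"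
    unfolding Suc x_Suc[of m] by (rule proj_le_dist[OF closed_Q convex_Q Q_nonempty])
  then show ?thesis by (simp add: dist_norm norm_minus_commute)
qed simp

lemma norm_x_Suc_ge: "(norm (x n - x 0))\<^sup>2 + (norm (x (Suc n) - x n))\<^sup>2 \<le> (norm (x (Suc n) - x 0))\<^sup>2"
  using halfsp_pythagoras[of "x (Suc n)" "x 0" "x n"] x_Suc_in_Q[of n]
  by (simp add: norm_minus_commute)

lemma incseq_norm_x: "incseq (\<lambda>n. norm (x n - x 0))"
proof (rule incseq_SucI)
  fix n
  have "(norm (x n - x 0))\<^sup>2 \<le> (norm (x (Suc n) - x 0))\<^sup>2"
    using norm_x_Suc_ge[of n] zero_le_power2[of "norm (x (Suc n) - x n)"] by linarith
  then show "norm (x n - x 0) \<le> norm (x (Suc n) - x 0)" by (rule power2_le_imp_le) simp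
qed

lemma norm_x_convergent:
  obtains L where "(\<lambda>n. norm (x n - x 0)) \<longlonglongrightarrow> L" "L \<le> norm (proj Z (x 0) - x 0)"
proof -
  obtain L where "(\<lambda>n. norm (x n - x 0)) \<longlonglongrightarrow> L"
    using incseq_convergent[OF incseq_norm_x] norm_x_le_proj by blast
  moreover from this have "L \<le> norm (proj Z (x 0) - x 0)"
    using norm_x_le_proj by (intro LIMSEQ_le_const2) auto
  ultimately show ?thesis by (rule that)
qed

lemma summable_steps: "summable (\<lambda>n. (norm (x (Suc n) - x n))\<^sup>2)"
proof -
  obtain L where "(\<lambda>n. norm (x n - x 0)) \<longlonglongrightarrow> L" by (rule norm_x_convergent)
  then have "summable (\<lambda>n. (norm (x (Suc n) - x 0))\<^sup>2 - (norm (x n - x 0))\<^sup>2)"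
    by (rule telescope_summable[OF tendsto_power])
  then show ?thesis
  proof (rule summable_comparison_test')
    show "norm ((norm (x (Suc n) - x n))\<^sup>2) \<le> (norm (x (Suc n) - x 0))\<^sup>2 - (norm (x n - x 0))\<^sup>2" for n
      using norm_x_Suc_ge[of n] by simp
  qed
qed

lemma summable_half_steps: "summable (\<lambda>n. (norm (xh n - x n))\<^sup>2)"
proof (rule summable_comparison_test'[OF summable_steps])
  fix n
  have "x (Suc n) \<in> halfsp (x n) (xh n)" using x_Suc_in_Q C(4) by blast
  from halfsp_pythagoras[OF this]
  show "norm ((norm (xh n - x n))\<^sup>2) \<le> (norm (x (Suc n) - x n))\<^sup>2"
    using zero_le_power2[of "norm (x (Suc n) - xh n)"] norm_minus_commute[of "x n" "xh n"]
    by (simp only: real_norm_def abs_power2)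
qed

lemma tendsto_proj:
  assumes weak_cluster: "\<forall>z k. strict_mono k \<and> weak_conv (x \<circ> k) z \<longrightarrow> z \<in> Z"
  shows "x \<longlonglongrightarrow> proj Z (x 0)"
proof -
  define p where "p = proj Z (x 0)"
  define R where "R = norm (p - x 0)"
  obtain L where L: "(\<lambda>n. norm (x n - x 0)) \<longlonglongrightarrow> L" "L \<le> R"
    unfolding R_def p_def by (rule norm_x_convergent)
  have x_le_L: "norm (x n - x 0) \<le> L" for n
    using incseq_le[OF incseq_norm_x L(1)] by blast
  have "norm (x n) \<le> norm (x 0) + L" for n
    using norm_triangle_sub[of "x n" "x 0"] x_le_L[of n] by linarith
  then obtain k z where "strict_mono k" "weak_conv (x \<circ> k) z"
    using bounded_imp_weak_conv_subseq by blast
  then have "z \<in> Z" "norm (z - x 0) \<le> L"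
    using weak_cluster x_le_L by (auto intro: weak_conv_norm_le)
  moreover have "R \<le> norm (z - x 0)"
    using proj_le_dist[OF Z(2,3,1) \<open>z \<in> Z\<close>, of "x 0"]
    by (simp add: R_def p_def dist_norm norm_minus_commute)
  ultimately have "L = R" using L(2) by linarith
  have bound: "(norm (x n - p))\<^sup>2 \<le> R\<^sup>2 - (norm (x n - x 0))\<^sup>2" for n
  proof -
    have "p \<in> halfsp (x 0) (x n)" using Z_subset_Q proj_in[OF Z(2,3,1)] unfolding p_def by blast
    from halfsp_pythagoras[OF this] show ?thesis by (simp add: R_def norm_minus_commute)
  qed
  have "(\<lambda>n. (norm (x n - p))\<^sup>2) \<longlonglongrightarrow> 0"
  proof (rule tendsto_sandwich)
    show "\<forall>\<^sub>F n in sequentially. 0 \<le> (norm (x n - p))\<^sup>2" by simp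
    show "\<forall>\<^sub>F n in sequentially. (norm (x n - p))\<^sup>2 \<le> R\<^sup>2 - (norm (x n - x 0))\<^sup>2"
      using bound by simp
    have "(\<lambda>n. R\<^sup>2 - (norm (x n - x 0))\<^sup>2) \<longlonglongrightarrow> R\<^sup>2 - L\<^sup>2"
      by (intro tendsto_intros L(1))
    then show "(\<lambda>n. R\<^sup>2 - (norm (x n - x 0))\<^sup>2) \<longlonglongrightarrow> 0"
      using \<open>L = R\<close> by simp
  qed simp
  then have "(\<lambda>n. norm (x n - p)) \<longlonglongrightarrow> 0"
    using tendsto_real_sqrt by fastforce
  then show ?thesis
    unfolding p_def by (simp add: LIM_zero_cancel tendsto_norm_zero_iff)
qed

end

theorem proposition3:
  fixes Z :: "('h::{real_inner,complete_space} \<times> 'g::{real_inner,complete_space}) set"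
    and x xh :: "nat \<Rightarrow> 'h \<times> 'g"
    and lam :: "nat \<Rightarrow> real"
    and Hn Cn :: "nat \<Rightarrow> ('h \<times> 'g) set"
  assumes Z: "Z \<noteq> {}" "closed Z" "convex Z"
    and lam: "\<And>n. 0 < lam n \<and> lam n \<le> 1"
    and Hn: "\<And>n. closed (Hn n) \<and> convex (Hn n) \<and> Z \<subseteq> Hn n"
    and xh: "\<And>n. xh n = x n + lam n *\<^sub>R (proj (Hn n) (x n) - x n)"
    and Cn: "\<And>n. closed (Cn n) \<and> convex (Cn n) \<and> Z \<subseteq> Cn n \<and> Cn n \<subseteq> halfsp (x n) (xh n)"
    and xs: "\<And>n. x (Suc n) = proj (halfsp (x 0) (x n) \<inter> Cn n) (x 0)"
  shows "(\<forall>n. Z \<subseteq> halfsp (x 0) (x n) \<inter> Cn n)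
    \<and> (\<forall>n. norm (x (Suc n) - x 0) \<ge> norm (x n - x 0))
    \<and> summable (\<lambda>n. (norm (x (Suc n) - x n))\<^sup>2)
    \<and> summable (\<lambda>n. (norm (xh n - x n))\<^sup>2)
    \<and> ((\<forall>z k. strict_mono k \<and> weak_conv (x \<circ> k) z \<longrightarrow> z \<in> Z)
         \<longrightarrow> x \<longlonglongrightarrow> proj Z (x 0))"
proof -
  interpret haugazeau_iteration Z x xh Cn
    using Z Cn xs by unfold_locales auto
  show ?thesis
    using Z_subset_Q incseq_SucD[OF incseq_norm_x] summable_steps summable_half_steps tendsto_proj
    by blast
qed

end
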